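(* With $w=-x^{q^n-1}$ and $z=-y^{q^n-1}$ in the basic function field $F$, one has $K(u)=K(z,w)$.
   Context: Standing setup: $p$ is a prime, $q$ a power of $p$, $n\ge2$, $\ell=q^n$, and $K$ is either $\mathbb{F}_\ell$ or its algebraic closure $\overline{\mathbb{F}}_\ell$. For $a\ge1$, $\mathrm{Tr}_a(T)=T+T^q+\cdots+T^{q^{a-1}}$. Fix integers $j,k\ge1$ with $n=j+k$, $\gcd(j,k)=1$ and $p\nmid j$, and let $\alpha\in\mathbb{F}_p$ be the inverse of $j$ modulo $p$. The basic function field is $F=K(x,y)$ where $x$ is transcendental over $K$ and $y$ is algebraic over $K(x)$ with $\mathrm{Tr}_j(y/x^{q^k})+\mathrm{Tr}_k(y^{q^j}/x)=1$. $u\in F$ is the unique element with $y/x^{q^k}=\mathrm{Tr}_k(u)+\alpha$ and $y^{q^j}/x=-\mathrm{Tr}_j(u)$. *)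

theory Defs
  imports "HOL-Computational_Algebra.Polynomial"
begin

definition is_subfield :: "'a::field set \<Rightarrow> bool" where
  "is_subfield L \<longleftrightarrow> 0 \<in> L \<and> 1 \<in> L \<and>
     (\<forall>a\<in>L. \<forall>b\<in>L. a + b \<in> L \<and> a - b \<in> L \<and> a * b \<in> L) \<and>
     (\<forall>a\<in>L. inverse a \<in> L)"

definition field_adj :: "'a::field set \<Rightarrow> 'a set \<Rightarrow> 'a set" where
  "field_adj K S = \<Inter>{L. is_subfield L \<and> K \<subseteq> L \<and> S \<subseteq> L}"

definition Tr :: "nat \<Rightarrow> nat \<Rightarrow> 'a::field \<Rightarrow> 'a" where
  "Tr q a t = (\<Sum>i<a. t ^ (q ^ i))"

definition transcendental_over :: "'a::field set \<Rightarrow> 'a \<Rightarrow> bool" where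
  "transcendental_over K x \<longleftrightarrow>
     (\<forall>P::'a poly. (\<forall>i. coeff P i \<in> K) \<and> P \<noteq> 0 \<longrightarrow> poly P x \<noteq> 0)"

definition is_finite_field_of_size :: "'a::field set \<Rightarrow> nat \<Rightarrow> bool" where
  "is_finite_field_of_size K l \<longleftrightarrow> is_subfield K \<and> finite K \<and> card K = l"

text \<open>K is an algebraic closure of F_l: an algebraically closed subfield all of whose
  elements are algebraic over the prime field (i.e. lie in some finite field F_(l^m)).\<close>
definition is_alg_closure_of_Fl :: "'a::field set \<Rightarrow> nat \<Rightarrow> bool" where
  "is_alg_closure_of_Fl K l \<longleftrightarrow> is_subfield K \<and>
     (\<forall>c\<in>K. \<exists>m\<ge>1. c ^ (l ^ m) = c) \<and>
     (\<forall>P::'a poly. (\<forall>i. coeff P i \<in> K) \<and> degree P \<ge> 1 \<longrightarrow> (\<exists>r\<in>K. poly P r = 0))"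

end

theory Submission
  imports Defs "HOL-Computational_Algebra.Primes"
begin

(* Write A = y/x^(q^k), B = y^(q^j)/x, X = x^(l-1), Y = y^(l-1).  The defining
   equations become  Tr_j A + Tr_k B = 1,  A = Tr_k u + alpha,  B = -Tr_j u,  and
   x, y enter only through the two identities  B = X A^(q^j)  and  B^(q^k) = Y A.
   The locale basic_relations collects exactly these relations; everything is
   then field arithmetic in characteristic p.
   K(X,Y) <= K(u): A, B lie in K(u), hence so do X = B/A^(q^j) and Y = B^(q^k)/A.
   K(u) <= K(X,Y): call m admissible if A^(q^m) = c A with c in K(X,Y).  The
   identities make n admissible, and comparing Tr_j u + (Tr_k u)^(q^j) with
   Tr_k u + (Tr_j u)^(q^k) makes j admissible; admissibility is closed under
   subtraction, so by the Euclidean algorithm every m is admissible.  Then the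
   trace equation reads D A = 1 with D in K(X,Y), so A, B, Tr_k u, Tr_j u lie in
   K(X,Y), and a second Euclidean argument (on Tr_(a+b) = Tr_a + Tr_b^(q^a))
   gives Tr_1 u = u in K(X,Y). *)

context
  fixes L :: "'a::field set"
  assumes L: "is_subfield L"
begin

lemma subfield_0: "0 \<in> L" and subfield_1: "1 \<in> L"
  using L unfolding is_subfield_def by auto

lemma subfield_add: "a \<in> L \<Longrightarrow> b \<in> L \<Longrightarrow> a + b \<in> L"
  and subfield_diff: "a \<in> L \<Longrightarrow> b \<in> L \<Longrightarrow> a - b \<in> L"
  and subfield_mult: "a \<in> L \<Longrightarrow> b \<in> L \<Longrightarrow> a * b \<in> L"
  and subfield_inverse: "a \<in> L \<Longrightarrow> inverse a \<in> L"
  using L unfolding is_subfield_def by auto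

lemma subfield_divide: "a \<in> L \<Longrightarrow> b \<in> L \<Longrightarrow> a / b \<in> L"
  by (simp add: divide_inverse subfield_mult subfield_inverse)

lemma subfield_uminus: "a \<in> L \<Longrightarrow> - a \<in> L"
  using subfield_diff[OF subfield_0] by fastforce

lemma subfield_power: "a \<in> L \<Longrightarrow> a ^ n \<in> L"
  by (induction n) (auto intro: subfield_1 subfield_mult)

lemma subfield_sum: "(\<And>i. i \<in> I \<Longrightarrow> f i \<in> L) \<Longrightarrow> sum f I \<in> L"
  by (induction I rule: infinite_finite_induct) (auto intro: subfield_0 subfield_add)

lemma subfield_of_nat: "of_nat m \<in> L"
  by (induction m) (auto intro: subfield_0 subfield_1 subfield_add)

lemma subfield_Tr: "a \<in> L \<Longrightarrow> Tr q m a \<in> L"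
  unfolding Tr_def by (auto intro: subfield_sum subfield_power)

end

lemma field_adj_subfield: "is_subfield (field_adj K S)"
  unfolding is_subfield_def field_adj_def by auto

lemma field_adj_base: "K \<subseteq> field_adj K S"
  and field_adj_generators: "S \<subseteq> field_adj K S"
  unfolding field_adj_def by auto

lemma field_adj_least: "is_subfield M \<Longrightarrow> K \<subseteq> M \<Longrightarrow> S \<subseteq> M \<Longrightarrow> field_adj K S \<subseteq> M"
  unfolding field_adj_def by auto

lemma transcendental_power_neq:
  assumes K: "is_subfield K" and x: "transcendental_over K x"
    and n: "n \<ge> 1" and c: "c \<in> K"
  shows "x ^ n \<noteq> c"
proof
  assume root: "x ^ n = c"
  define P :: "'a poly" where "P = monom 1 n - [:c:]"
  have coeffs: "coeff P i \<in> K" for i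
    unfolding P_def using subfield_0[OF K] subfield_1[OF K] subfield_diff[OF K] c
    by (auto simp: coeff_monom coeff_pCons split: nat.splits)
  have "coeff P n = 1"
    using n unfolding P_def by (cases n) (simp_all add: coeff_monom)
  then have "P \<noteq> 0" by auto
  with coeffs x have "poly P x \<noteq> 0"
    unfolding transcendental_over_def by blast
  with root show False unfolding P_def by (simp add: poly_monom)
qed

subsection \<open>The Euclidean algorithm on a subtraction-closed set\<close>

lemma subtraction_closed_gcd:
  fixes P :: "nat \<Rightarrow> bool"
  assumes step: "\<And>a b. P a \<Longrightarrow> P b \<Longrightarrow> b < a \<Longrightarrow> P (a - b)"
  shows "P a \<Longrightarrow> P b \<Longrightarrow> 0 < a \<Longrightarrow> 0 < b \<Longrightarrow> P (gcd a b)"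
proof (induction "a + b" arbitrary: a b rule: less_induct)
  case less
  show ?case
  proof (cases a b rule: linorder_cases)
    case equal
    then show ?thesis using less by simp
  next
    case greater
    have "P (gcd (a - b) b)"
      using less.hyps[of "a - b" b] step[OF less.prems(1,2) greater] less.prems greater by simp
    then show ?thesis using gcd_diff1_nat[of b a] greater by simp
  next
    case smaller: less
    have "P (gcd a (b - a))"
      using less.hyps[of a "b - a"] step[OF less.prems(2,1) smaller] less.prems smaller by simp
    then show ?thesis using smaller gcd_diff1_nat[of a b] by (simp add: gcd.commute)
  qed
qed

subsection \<open>Frobenius and the traces Tr_a in characteristic p\<close>

lemma CHAR_eq_prime:
  assumes "prime p" "of_nat p = (0::'a::field)"
  shows "CHAR('a) = p"
proof -
  have "CHAR('a) dvd p" using assms(2) of_nat_eq_0_iff_char_dvd by blast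
  moreover have "CHAR('a) \<noteq> 1" using CHAR_not_1[where 'a='a] by simp
  ultimately show ?thesis using assms(1) unfolding prime_nat_iff by blast
qed

context
  fixes p e q :: nat
  assumes prime_p: "prime p" and char_p: "of_nat p = (0::'a::field)" and q_def: "q = p ^ e"
begin

lemma q_power_eq: "q ^ m = CHAR('a) ^ (e * m)"
  by (simp add: q_def CHAR_eq_prime[OF prime_p char_p] power_mult)

lemma frobenius_add: "(a + b) ^ (q ^ m) = a ^ (q ^ m) + (b::'a) ^ (q ^ m)"
  using freshmans_dream'[OF _ q_power_eq] CHAR_eq_prime[OF prime_p char_p] prime_p by simp

lemma frobenius_diff: "(a - b) ^ (q ^ m) = a ^ (q ^ m) - (b::'a) ^ (q ^ m)"
  using frobenius_add[of "a - b" b m] by simp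

lemma frobenius_uminus: "(- a) ^ (q ^ m) = - ((a::'a) ^ (q ^ m))"
  using frobenius_diff[of 0 a m] prime_gt_0_nat[OF prime_p] by (simp add: q_def)

lemma frobenius_of_nat: "(of_nat n :: 'a) ^ (q ^ m) = of_nat n"
proof (induction n)
  case 0
  then show ?case using prime_gt_0_nat[OF prime_p] by (simp add: q_def)
next
  case (Suc n)
  then show ?case using frobenius_add[of "of_nat n" 1 m] by (simp add: add.commute)
qed

lemma frobenius_inverse_of_nat: "(inverse (of_nat n) :: 'a) ^ (q ^ m) = inverse (of_nat n)"
  by (simp add: power_inverse frobenius_of_nat)

lemma Tr_add: "Tr q (a + b) (t::'a) = Tr q a t + Tr q b t ^ (q ^ a)"
proof (induction b)
  case 0
  then show ?case using prime_gt_0_nat[OF prime_p] by (simp add: Tr_def q_def)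
next
  case (Suc b)
  have "Tr q (Suc b) t ^ (q ^ a) = (Tr q b t + t ^ (q ^ b)) ^ (q ^ a)"
    by (simp add: Tr_def)
  also have "\<dots> = Tr q b t ^ (q ^ a) + (t ^ (q ^ b)) ^ (q ^ a)"
    by (rule frobenius_add)
  also have "(t ^ (q ^ b)) ^ (q ^ a) = t ^ (q ^ (a + b))"
    by (simp add: power_add mult.commute flip: power_mult)
  finally show ?case using Suc by (simp add: Tr_def)
qed

lemma Tr_gcd_in_subfield:
  assumes L: "is_subfield L" and "Tr q a t \<in> L" "Tr q b t \<in> L" "0 < a" "0 < b"
  shows "Tr q (gcd a b) (t::'a) \<in> L"
proof (rule subtraction_closed_gcd[where P = "\<lambda>m. Tr q m t \<in> L"])
  fix a b :: nat
  assume "Tr q a t \<in> L" "Tr q b t \<in> L" "b < a"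
  moreover have "Tr q (a - b) t = Tr q a t - Tr q b t ^ (q ^ (a - b))"
    using Tr_add[of "a - b" b t] \<open>b < a\<close> by simp
  ultimately show "Tr q (a - b) t \<in> L"
    by (simp add: subfield_diff[OF L] subfield_power[OF L])
qed (use assms in auto)

end

definition frobenius_multiple :: "'a::field set \<Rightarrow> nat \<Rightarrow> nat \<Rightarrow> 'a \<Rightarrow> bool" where
  "frobenius_multiple L q m A \<longleftrightarrow> (\<exists>c\<in>L. A ^ (q ^ m) = c * A)"

lemma frobenius_multiple_diff:
  assumes L: "is_subfield L" and A: "A \<noteq> 0"
    and "frobenius_multiple L q a A" "frobenius_multiple L q b A" "b < a"
  shows "frobenius_multiple L q (a - b) A"
proof -
  obtain ca where ca: "ca \<in> L" "A ^ (q ^ a) = ca * A"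
    using assms(3) unfolding frobenius_multiple_def by blast
  obtain cb where cb: "cb \<in> L" "A ^ (q ^ b) = cb * A"
    using assms(4) unfolding frobenius_multiple_def by blast
  define Q where "Q = q ^ (a - b)"
  have "A ^ (q ^ a) = (A ^ (q ^ b)) ^ Q"
    using \<open>b < a\<close> unfolding Q_def by (simp add: power_mult[symmetric] power_add[symmetric])
  then have "ca * A = cb ^ Q * A ^ Q" using ca cb by (simp add: power_mult_distrib)
  moreover have "cb \<noteq> 0" using cb(2) A by auto
  ultimately have "A ^ Q = (ca / cb ^ Q) * A" by (simp add: field_simps)
  then show ?thesis unfolding frobenius_multiple_def Q_def
    using subfield_divide[OF L] subfield_power[OF L] ca(1) cb(1) by blast
qed

lemma frobenius_multiple_power:
  assumes L: "is_subfield L" and one: "frobenius_multiple L q 1 A"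
  shows "frobenius_multiple L q m A"
proof (induction m)
  case 0
  then show ?case unfolding frobenius_multiple_def using subfield_1[OF L] by auto
next
  case (Suc m)
  obtain c where c: "c \<in> L" "A ^ q = c * A"
    using one unfolding frobenius_multiple_def by auto
  obtain d where d: "d \<in> L" "A ^ (q ^ m) = d * A"
    using Suc unfolding frobenius_multiple_def by auto
  have "A ^ (q ^ Suc m) = (A ^ (q ^ m)) ^ q" by (simp add: power_mult[symmetric] mult.commute)
  also have "\<dots> = d ^ q * c * A" using c d by (simp add: power_mult_distrib)
  finally show ?case
    unfolding frobenius_multiple_def using subfield_mult[OF L] subfield_power[OF L] c d by blast
qed

lemma frobenius_multiple_coprime:
  assumes L: "is_subfield L" and A: "A \<noteq> 0" and "coprime a b" "0 < a" "0 < b"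
    and "frobenius_multiple L q a A" "frobenius_multiple L q b A"
  shows "frobenius_multiple L q m A"
proof -
  have "frobenius_multiple L q (gcd a b) A"
    using subtraction_closed_gcd[of "\<lambda>m. frobenius_multiple L q m A"]
      frobenius_multiple_diff[OF L A] assms(4-7) by blast
  with \<open>coprime a b\<close> show ?thesis
    using frobenius_multiple_power[OF L] by simp
qed

subsection \<open>The relations of the basic function field\<close>

lemma basic_identity_B:
  fixes x y :: "'a::field"
  assumes "q > 0" "x \<noteq> 0"
  shows "y ^ (q ^ j) / x = x ^ (q ^ (j + k) - 1) * (y / x ^ (q ^ k)) ^ (q ^ j)"
proof -
  have "x ^ (q ^ (j + k)) = x ^ (q ^ (j + k) - 1) * x"
    using assms(1) by (simp flip: power_Suc2)
  then show ?thesis using assms(2)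
    by (simp add: power_divide power_mult[symmetric] power_add mult.commute)
qed

lemma basic_identity_B_power:
  fixes x y :: "'a::field"
  assumes "q > 0"
  shows "(y ^ (q ^ j) / x) ^ (q ^ k) = y ^ (q ^ (j + k) - 1) * (y / x ^ (q ^ k))"
proof -
  have "y ^ (q ^ (j + k)) = y ^ (q ^ (j + k) - 1) * y"
    using assms by (simp flip: power_Suc2)
  then show ?thesis
    by (simp add: power_divide power_mult[symmetric] power_add mult.commute)
qed

locale basic_relations =
  fixes p e q j k :: nat and u A B X Y \<alpha> :: "'a::field"
  assumes prime_p: "prime p" and char_p: "of_nat p = (0::'a)" and q_def: "q = p ^ e"
    and j_pos: "j \<ge> 1" and k_pos: "k \<ge> 1" and coprime_jk: "coprime j k"
    and trace_eq: "Tr q j A + Tr q k B = 1"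
    and A_Tr: "A = Tr q k u + \<alpha>" and B_Tr: "B = - Tr q j u"
    and \<alpha>_fixed: "\<alpha> ^ (q ^ j) = \<alpha>"
    and B_X: "B = X * A ^ (q ^ j)" and B_power: "B ^ (q ^ k) = Y * A"
    and X_nonzero: "X \<noteq> 0" and X_neq_1: "X \<noteq> 1"
begin

lemma A_nonzero: "A \<noteq> 0"
proof
  assume "A = 0"
  then have "B = 0" using B_X q_def prime_gt_0_nat[OF prime_p] by simp
  with \<open>A = 0\<close> trace_eq show False
    using q_def prime_gt_0_nat[OF prime_p] by (simp add: Tr_def power_0_left)
qed

text \<open>Comparing the two expansions of Tr_(j+k) u gives (1 - Y) A = (1 - X) A^(q^j).\<close>

lemma twisted_relation: "(1 - Y) * A = (1 - X) * A ^ (q ^ j)"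
proof -
  have sym: "Tr q j u + Tr q k u ^ (q ^ j) = Tr q k u + Tr q j u ^ (q ^ k)"
    using Tr_add[OF prime_p char_p q_def, of j k u] Tr_add[OF prime_p char_p q_def, of k j u]
    by (simp add: add.commute)
  have Tr_k: "Tr q k u = A - \<alpha>" and Tr_j: "Tr q j u = - B"
    using A_Tr B_Tr by simp_all
  have "Tr q k u ^ (q ^ j) = A ^ (q ^ j) - \<alpha>"
    using Tr_k frobenius_diff[OF prime_p char_p q_def] \<alpha>_fixed by simp
  moreover have "Tr q j u ^ (q ^ k) = - (Y * A)"
    using Tr_j frobenius_uminus[OF prime_p char_p q_def] B_power by simp
  ultimately have "Tr q j u + (A ^ (q ^ j) - \<alpha>) = Tr q k u - Y * A"
    using sym by simp
  then have "- (X * A ^ (q ^ j)) + (A ^ (q ^ j) - \<alpha>) = (A - \<alpha>) - Y * A"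
    using Tr_k Tr_j B_X by simp
  then show ?thesis by (simp add: algebra_simps)
qed

context
  fixes L assumes L: "is_subfield L" and X_L: "X \<in> L" and Y_L: "Y \<in> L"
begin

lemma frobenius_multiple_j: "frobenius_multiple L q j A"
proof -
  have "A ^ (q ^ j) = ((1 - Y) / (1 - X)) * A"
  proof -
    have "1 - X \<noteq> 0" using X_neq_1 by simp
    then show ?thesis using twisted_relation by (simp add: field_simps)
  qed
  then show ?thesis unfolding frobenius_multiple_def
    using subfield_divide[OF L] subfield_diff[OF L] subfield_1[OF L] X_L Y_L by blast
qed

lemma frobenius_multiple_n: "frobenius_multiple L q (j + k) A"
proof -
  have "A ^ (q ^ (j + k)) = (A ^ (q ^ j)) ^ (q ^ k)" by (simp add: power_add power_mult)
  also have "\<dots> = (B / X) ^ (q ^ k)" using B_X X_nonzero by simp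
  also have "\<dots> = (Y / X ^ (q ^ k)) * A" using B_power by (simp add: power_divide)
  finally show ?thesis unfolding frobenius_multiple_def
    using subfield_divide[OF L] subfield_power[OF L] X_L Y_L by blast
qed

text \<open>With A^(q^i) = d_i A for all i, the trace equation becomes D A = 1, D in L.\<close>

lemma A_in_subfield: "A \<in> L"
proof -
  have "coprime (j + k) j"
    using coprime_jk by (simp add: coprime_iff_gcd_eq_1 gcd.commute[of "j + k" j])
  then have "frobenius_multiple L q i A" for i
    using frobenius_multiple_coprime[OF L A_nonzero _ _ _ frobenius_multiple_n frobenius_multiple_j]
      j_pos by simp
  then obtain d where d: "\<And>i. d i \<in> L" "\<And>i. A ^ (q ^ i) = d i * A"
    unfolding frobenius_multiple_def by metis
  define D where "D = (\<Sum>i<j. d i) + (\<Sum>i<k. X ^ (q ^ i) * d (j + i))"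
  have "Tr q j A = (\<Sum>i<j. d i) * A"
    unfolding Tr_def using d(2) by (simp add: sum_distrib_right)
  moreover have "Tr q k B = (\<Sum>i<k. X ^ (q ^ i) * d (j + i)) * A"
  proof -
    have "Tr q k B = (\<Sum>i<k. X ^ (q ^ i) * A ^ (q ^ (j + i)))"
      unfolding Tr_def B_X by (simp add: power_mult_distrib power_mult[symmetric] power_add)
    then show ?thesis using d(2) by (simp add: sum_distrib_right mult.assoc)
  qed
  ultimately have "D * A = 1" using trace_eq unfolding D_def by (simp add: algebra_simps)
  then have "A = inverse D" using inverse_unique by metis
  moreover have "D \<in> L" unfolding D_def using d(1) X_L
    by (intro subfield_add[OF L] subfield_sum[OF L] subfield_mult[OF L] subfield_power[OF L])
  ultimately show ?thesis using subfield_inverse[OF L] by simp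
qed

lemma u_in_subfield:
  assumes \<alpha>_L: "\<alpha> \<in> L"
  shows "u \<in> L"
proof -
  have "Tr q k u = A - \<alpha>" and "Tr q j u = - (X * A ^ (q ^ j))"
    using A_Tr B_Tr B_X by simp_all
  then have "Tr q k u \<in> L" and "Tr q j u \<in> L"
    using A_in_subfield X_L \<alpha>_L subfield_diff[OF L] subfield_uminus[OF L]
      subfield_mult[OF L] subfield_power[OF L] by simp_all
  then have "Tr q (gcd j k) u \<in> L"
    using Tr_gcd_in_subfield[OF prime_p char_p q_def L] j_pos k_pos by simp
  then show ?thesis using coprime_jk by (simp add: Tr_def)
qed

end

lemma X_Y_in_subfield:
  assumes L: "is_subfield L" and u_L: "u \<in> L" and \<alpha>_L: "\<alpha> \<in> L"
  shows "X \<in> L" "Y \<in> L"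
proof -
  have A_L: "A \<in> L" using A_Tr subfield_add[OF L] subfield_Tr[OF L u_L] \<alpha>_L by simp
  have B_L: "B \<in> L" using B_Tr subfield_uminus[OF L] subfield_Tr[OF L u_L] by simp
  have "X = B / A ^ (q ^ j)" and "Y = B ^ (q ^ k) / A"
    using B_X B_power A_nonzero by simp_all
  then show "X \<in> L" "Y \<in> L"
    using subfield_divide[OF L] subfield_power[OF L] A_L B_L by simp_all
qed

theorem generated_subfields_eq:
  assumes K: "is_subfield K" and \<alpha>_K: "\<alpha> \<in> K"
  shows "field_adj K {u} = field_adj K {- Y, - X}"
proof
  let ?Lu = "field_adj K {u}" and ?LXY = "field_adj K {- Y, - X}"
  have Lu: "is_subfield ?Lu" and K_Lu: "K \<subseteq> ?Lu"
    by (rule field_adj_subfield, rule field_adj_base)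
  have LXY: "is_subfield ?LXY" and K_LXY: "K \<subseteq> ?LXY"
    by (rule field_adj_subfield, rule field_adj_base)
  have "u \<in> ?Lu" using field_adj_generators[of "{u}" K] by simp
  then have "X \<in> ?Lu" "Y \<in> ?Lu"
    using X_Y_in_subfield[OF Lu] \<alpha>_K K_Lu by blast+
  then show "?LXY \<subseteq> ?Lu"
    using field_adj_least[OF Lu K_Lu] subfield_uminus[OF Lu] by simp
  have "- Y \<in> ?LXY" "- X \<in> ?LXY" using field_adj_generators[of "{- Y, - X}" K] by auto
  then have "X \<in> ?LXY" "Y \<in> ?LXY" using subfield_uminus[OF LXY] by force+
  then have "u \<in> ?LXY" using u_in_subfield[OF LXY] \<alpha>_K K_LXY by blast
  then show "?Lu \<subseteq> ?LXY" using field_adj_least[OF LXY K_LXY] by simp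
qed

end

text \<open>The finite/algebraically closed base field enters only as a subfield
  containing alpha = 1/j, and the transcendence of x only through x \<noteq> 0 and
  x^(l-1) \<noteq> 1.\<close>

theorem lemma2p9:
  fixes p q j k :: nat and K :: "'a::field set" and x y u :: 'a
  assumes "prime p" and "of_nat p = (0::'a)"
    and "\<exists>e\<ge>1. q = p ^ e"
    and "j \<ge> 1" and "k \<ge> 1" and "j + k \<ge> 2"
    and "coprime j k" and "\<not> p dvd j"
    and "is_finite_field_of_size K (q ^ (j + k)) \<or> is_alg_closure_of_Fl K (q ^ (j + k))"
    and "transcendental_over K x"
    and "Tr q j (y / x ^ (q ^ k)) + Tr q k (y ^ (q ^ j) / x) = 1"
    and "u \<in> field_adj K {x, y}"
    and "y / x ^ (q ^ k) = Tr q k u + inverse (of_nat j)"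
    and "y ^ (q ^ j) / x = - Tr q j u"
  shows "field_adj K {u} =
         field_adj K {- (y ^ (q ^ (j + k) - 1)), - (x ^ (q ^ (j + k) - 1))}"
proof -
  obtain e where e: "e \<ge> 1" "q = p ^ e" using assms(3) by blast
  have "p ^ 1 \<le> q"
    unfolding e(2) using e(1) prime_gt_1_nat[OF assms(1)] by (intro power_increasing) auto
  then have q2: "q \<ge> 2" using prime_ge_2_nat[OF assms(1)] by simp
  have "q ^ 1 \<le> q ^ (j + k)" using assms(4) q2 by (intro power_increasing) auto
  then have l_exp: "q ^ (j + k) - 1 \<ge> 1" using q2 by simp
  have q_pos: "q > 0" using q2 by simp
  have K: "is_subfield K"
    using assms(9) unfolding is_finite_field_of_size_def is_alg_closure_of_Fl_def by blast
  have x0: "x \<noteq> 0"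
    using transcendental_power_neq[OF K assms(10) order.refl subfield_0[OF K]] by simp
  have X1: "x ^ (q ^ (j + k) - 1) \<noteq> 1"
    using transcendental_power_neq[OF K assms(10) l_exp subfield_1[OF K]] .
  interpret basic_relations p e q j k u "y / x ^ (q ^ k)" "y ^ (q ^ j) / x"
      "x ^ (q ^ (j + k) - 1)" "y ^ (q ^ (j + k) - 1)" "inverse (of_nat j)"
    using basic_relations.intro[OF assms(1,2) e(2) assms(4,5,7,11,13,14)
        frobenius_inverse_of_nat[OF assms(1,2) e(2)] basic_identity_B[OF q_pos x0]
        basic_identity_B_power[OF q_pos] _ X1] x0 by simp
  show ?thesis
    using generated_subfields_eq[OF K subfield_inverse[OF K subfield_of_nat[OF K]]] .
qed

end
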